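(* Let $\mathbf p$ be a Nash-routing of a max game on a graph with $n\ge2$ nodes, with $C=C(\mathbf p)$, $D=D(\mathbf p)$, and let $\mathbf p^*$ be an optimal routing with $C^*=C(\mathbf p^* )$. If $C\ge D+2\lg n+2$, then $C<2LC^*+2\lg n$.
   Context: A routing game $(\mathbf N,G,\mathcal P)$: players $\{1,\dots,N\}$ ($N\ge1$), a simple graph $G=(V,E)$ with $n=|V|$ nodes, and for each player $i$ a nonempty finite set $\mathcal P_i$ of paths from $u_i$ to $v_i$; $L=\max_{p\in\bigcup_i\mathcal P_i}|p|$ (path length = number of edges). A routing is $\mathbf p=[p_1,\dots,p_N]$, $p_i\in\mathcal P_i$. $C_e(\mathbf p)$ = number of players whose path uses edge $e$; $C_i(\mathbf p)=\max_{e\in p_i}C_e(\mathbf p)$; $D_i(\mathbf p)=|p_i|$; $C(\mathbf p)=\max_eC_e(\mathbf p)$; $D(\mathbf p)=\max_i|p_i|$. Max game: player cost $pc_i=\max(C_i,D_i)$, social cost $SC=\max(C,D)$. A Nash-routing is one where no player can strictly lower $pc_i$ by unilaterally changing its path within $\mathcal P_i$; an optimal routing minimizes $SC$. $\lg=\log_2$. *)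

theory Defs
  imports Complex_Main
begin

definition simple_graph :: "'v set \<Rightarrow> 'v set set \<Rightarrow> bool" where
  "simple_graph V E \<longleftrightarrow> finite V \<and> (\<forall>e\<in>E. \<exists>a b. a \<noteq> b \<and> a \<in> V \<and> b \<in> V \<and> e = {a, b})"

definition is_path :: "'v set \<Rightarrow> 'v set set \<Rightarrow> 'v \<Rightarrow> 'v \<Rightarrow> 'v list \<Rightarrow> bool" where
  "is_path V E x y p \<longleftrightarrow> p \<noteq> [] \<and> hd p = x \<and> last p = y \<and> distinct p \<and> set p \<subseteq> V \<and>
     (\<forall>k. Suc k < length p \<longrightarrow> {p ! k, p ! Suc k} \<in> E)"

definition path_edges :: "'v list \<Rightarrow> 'v set set" where
  "path_edges p = {{p ! k, p ! Suc k} | k. Suc k < length p}"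

definition path_len :: "'v list \<Rightarrow> nat" where
  "path_len p = length p - 1"

definition routing_game ::
  "'v set \<Rightarrow> 'v set set \<Rightarrow> nat \<Rightarrow> (nat \<Rightarrow> 'v) \<Rightarrow> (nat \<Rightarrow> 'v) \<Rightarrow> (nat \<Rightarrow> 'v list set) \<Rightarrow> bool" where
  "routing_game V E N src dst P \<longleftrightarrow> simple_graph V E \<and> N \<ge> 1 \<and>
     (\<forall>i<N. finite (P i) \<and> P i \<noteq> {} \<and> (\<forall>p\<in>P i. is_path V E (src i) (dst i) p))"

definition is_routing :: "nat \<Rightarrow> (nat \<Rightarrow> 'v list set) \<Rightarrow> (nat \<Rightarrow> 'v list) \<Rightarrow> bool" where
  "is_routing N P r \<longleftrightarrow> (\<forall>i<N. r i \<in> P i)"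

definition edge_cong :: "nat \<Rightarrow> (nat \<Rightarrow> 'v list) \<Rightarrow> 'v set \<Rightarrow> nat" where
  "edge_cong N r e = card {i. i < N \<and> e \<in> path_edges (r i)}"

definition player_cong :: "nat \<Rightarrow> (nat \<Rightarrow> 'v list) \<Rightarrow> nat \<Rightarrow> nat" where
  "player_cong N r i = Max (insert 0 (edge_cong N r ` path_edges (r i)))"

definition player_cost :: "nat \<Rightarrow> (nat \<Rightarrow> 'v list) \<Rightarrow> nat \<Rightarrow> nat" where
  "player_cost N r i = max (player_cong N r i) (path_len (r i))"

definition congestion :: "'v set set \<Rightarrow> nat \<Rightarrow> (nat \<Rightarrow> 'v list) \<Rightarrow> nat" where
  "congestion E N r = Max (insert 0 (edge_cong N r ` E))"

definition dilation :: "nat \<Rightarrow> (nat \<Rightarrow> 'v list) \<Rightarrow> nat" where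
  "dilation N r = Max (insert 0 ((\<lambda>i. path_len (r i)) ` {..<N}))"

definition social_cost :: "'v set set \<Rightarrow> nat \<Rightarrow> (nat \<Rightarrow> 'v list) \<Rightarrow> nat" where
  "social_cost E N r = max (congestion E N r) (dilation N r)"

definition is_nash :: "nat \<Rightarrow> (nat \<Rightarrow> 'v list set) \<Rightarrow> (nat \<Rightarrow> 'v list) \<Rightarrow> bool" where
  "is_nash N P r \<longleftrightarrow> is_routing N P r \<and>
     (\<forall>i<N. \<forall>q\<in>P i. player_cost N r i \<le> player_cost N (r(i := q)) i)"

definition is_optimal :: "'v set set \<Rightarrow> nat \<Rightarrow> (nat \<Rightarrow> 'v list set) \<Rightarrow> (nat \<Rightarrow> 'v list) \<Rightarrow> bool" where
  "is_optimal E N P r \<longleftrightarrow> is_routing N P r \<and>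
     (\<forall>r'. is_routing N P r' \<longrightarrow> social_cost E N r \<le> social_cost E N r')"

definition max_path_len :: "nat \<Rightarrow> (nat \<Rightarrow> 'v list set) \<Rightarrow> nat" where
  "max_path_len N P = Max (path_len ` (\<Union>i<N. P i))"

end

theory Submission
  imports Defs
begin

(* Suppose  C >= 2 L C* + 2 lg n  for a Nash routing p.
   Let S(t) be the set of edges whose congestion under p is at least t.  If a player
   of p uses an edge of S(t+1) and its optimal path q is shorter than t+1, the Nash
   condition forces q to meet S(t): otherwise deviating to q would lower its cost.
   Counting the load on S(t+1) through the players of p, and the players meeting
   S(t) through p*, gives  |S(t+1)| (t+1) <= |S(t)| C* D.  For t+1 >= 2 C* L this
   means  |S(t)| >= 2 |S(t+1)|, so starting from the nonempty set S(C) and going down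
   k = floor(2 lg n) + 1 levels we obtain  |S(C-k)| >= 2^k > n^2 >= |E|, impossible. *)

lemma path_edges_image: "path_edges q = (\<lambda>k. {q!k, q!Suc k}) ` {..< length q - 1}"
  unfolding path_edges_def by auto

lemma finite_path_edges [simp]: "finite (path_edges q)"
  unfolding path_edges_image by simp

lemma card_path_edges_le: "card (path_edges q) \<le> path_len q"
  unfolding path_edges_image path_len_def
  by (metis card_image_le card_lessThan finite_lessThan)

lemma path_edges_nonempty: "0 < path_len q \<Longrightarrow> path_edges q \<noteq> {}"
  unfolding path_edges_def path_len_def by (auto intro!: exI[of _ 0])

lemma path_edges_subset: "is_path V E x y q \<Longrightarrow> path_edges q \<subseteq> E"
  unfolding is_path_def path_edges_def by auto

text \<open>Every edge is the image of a pair of vertices, so a simple graph on n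
  vertices has at most n^2 edges.\<close>
lemma simple_graph_edges:
  assumes "simple_graph V E"
  shows "finite E" and "card E \<le> card V ^ 2"
proof -
  have fV: "finite V" using assms unfolding simple_graph_def by auto
  have sub: "E \<subseteq> (\<lambda>(a, b). {a, b}) ` (V \<times> V)"
    using assms unfolding simple_graph_def by fastforce
  then show "finite E" using fV finite_subset by blast
  have "card E \<le> card ((\<lambda>(a, b). {a, b}) ` (V \<times> V))" using sub fV by (intro card_mono) auto
  also have "\<dots> \<le> card (V \<times> V)" using fV by (intro card_image_le) auto
  finally show "card E \<le> card V ^ 2" by (simp add: card_cartesian_product power2_eq_square)
qed

lemma edge_cong_le_congestion: "finite E \<Longrightarrow> e \<in> E \<Longrightarrow> edge_cong N r e \<le> congestion E N r"
  unfolding congestion_def by (simp add: Max_ge_iff)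

lemma edge_cong_le_player_cong: "e \<in> path_edges (r i) \<Longrightarrow> edge_cong N r e \<le> player_cong N r i"
  unfolding player_cong_def by (simp add: Max_ge_iff)

lemma player_cong_attained:
  assumes "t \<le> player_cong N r i" "0 < t"
  shows "\<exists>e\<in>path_edges (r i). t \<le> edge_cong N r e"
proof -
  have "player_cong N r i \<in> insert 0 (edge_cong N r ` path_edges (r i))"
    unfolding player_cong_def by (rule Max_in) auto
  then show ?thesis using assms by auto
qed

lemma congestion_attained:
  assumes "finite E" "0 < congestion E N r"
  shows "\<exists>e\<in>E. edge_cong N r e = congestion E N r"
proof -
  have "congestion E N r \<in> insert 0 (edge_cong N r ` E)"
    unfolding congestion_def by (rule Max_in) (use assms(1) in auto)
  then show ?thesis using assms(2) by auto
qed

lemma edge_cong_update: "edge_cong N (r(i := q)) e \<le> edge_cong N r e + 1"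
proof -
  have "{j. j < N \<and> e \<in> path_edges ((r(i := q)) j)} \<subseteq> insert i {j. j < N \<and> e \<in> path_edges (r j)}"
    by auto
  then have "edge_cong N (r(i := q)) e \<le> card (insert i {j. j < N \<and> e \<in> path_edges (r j)})"
    unfolding edge_cong_def by (intro card_mono) auto
  also have "\<dots> \<le> edge_cong N r e + 1"
    unfolding edge_cong_def by (simp add: card_insert_if)
  finally show ?thesis .
qed

lemma congestion_pos:
  assumes "finite E" "i < N" "path_edges (r i) \<subseteq> E" "0 < path_len (r i)"
  shows "1 \<le> congestion E N r"
proof -
  obtain e where e: "e \<in> path_edges (r i)" using path_edges_nonempty[OF assms(4)] by auto
  have "card {i} \<le> edge_cong N r e"
    unfolding edge_cong_def using assms(2) e by (intro card_mono) auto
  also have "\<dots> \<le> congestion E N r" using e assms(1,3) by (intro edge_cong_le_congestion) auto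
  finally show ?thesis by simp
qed

lemma path_len_le_dilation: "i < N \<Longrightarrow> path_len (r i) \<le> dilation N r"
  unfolding dilation_def by (intro Max_ge) auto

lemma load_double_count:
  assumes "finite F"
  shows "(\<Sum>e\<in>F. edge_cong N r e) = (\<Sum>i<N. card (F \<inter> path_edges (r i)))"
proof -
  have "(\<Sum>e\<in>F. edge_cong N r e) = (\<Sum>e\<in>F. \<Sum>i<N. if e \<in> path_edges (r i) then 1 else 0)"
  proof (rule sum.cong)
    fix e
    have "edge_cong N r e = card {i\<in>{..<N}. e \<in> path_edges (r i)}"
      unfolding edge_cong_def by (rule arg_cong[where f = card]) auto
    then show "edge_cong N r e = (\<Sum>i<N. if e \<in> path_edges (r i) then 1 else 0)"
      by (simp add: sum.If_cases Int_def conj_commute)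
  qed simp
  also have "\<dots> = (\<Sum>i<N. \<Sum>e\<in>F. if e \<in> path_edges (r i) then 1 else 0)"
    by (rule sum.swap)
  also have "\<dots> = (\<Sum>i<N. card (F \<inter> path_edges (r i)))"
    using assms by (simp add: sum.If_cases)
  finally show ?thesis .
qed

definition users :: "nat \<Rightarrow> (nat \<Rightarrow> 'v list) \<Rightarrow> 'v set set \<Rightarrow> nat set" where
  "users N r F = {i. i < N \<and> path_edges (r i) \<inter> F \<noteq> {}}"

text \<open>Each player meeting F contributes at most the dilation to the load on F.\<close>
lemma load_le_users_dilation:
  assumes "finite F"
  shows "(\<Sum>e\<in>F. edge_cong N r e) \<le> card (users N r F) * dilation N r"
proof -
  have "(\<Sum>e\<in>F. edge_cong N r e) = (\<Sum>i\<in>users N r F. card (F \<inter> path_edges (r i)))"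
    unfolding load_double_count[OF assms]
    by (rule sum.mono_neutral_right) (auto simp: users_def)
  also have "\<dots> \<le> card (users N r F) * dilation N r"
  proof (rule sum_bounded_above[where K = "dilation N r", simplified])
    fix i assume "i \<in> users N r F"
    then have "i < N" by (simp add: users_def)
    have "card (F \<inter> path_edges (r i)) \<le> card (path_edges (r i))" by (intro card_mono) auto
    also have "\<dots> \<le> dilation N r"
      using card_path_edges_le path_len_le_dilation[OF \<open>i < N\<close>] le_trans by blast
    finally show "card (F \<inter> path_edges (r i)) \<le> dilation N r" .
  qed
  finally show ?thesis .
qed

text \<open>Every edge of F carries at most the congestion many players.\<close>
lemma card_users_le:
  assumes "finite E" "F \<subseteq> E"
  shows "card (users N r F) \<le> card F * congestion E N r"
proof -
  have fF: "finite F" using assms finite_subset by blast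
  have "users N r F \<subseteq> (\<Union>e\<in>F. {i. i < N \<and> e \<in> path_edges (r i)})" unfolding users_def by auto
  then have "card (users N r F) \<le> card (\<Union>e\<in>F. {i. i < N \<and> e \<in> path_edges (r i)})"
    using fF by (intro card_mono) auto
  also have "\<dots> \<le> (\<Sum>e\<in>F. edge_cong N r e)"
    unfolding edge_cong_def by (rule card_UN_le[OF fF])
  also have "\<dots> \<le> card F * congestion E N r"
    using assms by (intro sum_bounded_above[where K = "congestion E N r", simplified]
        edge_cong_le_congestion) auto
  finally show ?thesis .
qed

definition congested_edges :: "'v set set \<Rightarrow> nat \<Rightarrow> (nat \<Rightarrow> 'v list) \<Rightarrow> nat \<Rightarrow> 'v set set" where
  "congested_edges E N r t = {e \<in> E. t \<le> edge_cong N r e}"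

lemma nash_deviation:
  assumes nash: "is_nash N P p" and "i < N" "q \<in> P i"
    and e: "e \<in> path_edges (p i)" "t \<le> edge_cong N p e" and short: "path_len q < t"
  shows "\<exists>e'\<in>path_edges q. t \<le> edge_cong N p e' + 1"
proof -
  have "t \<le> player_cost N p i"
    using e(2) edge_cong_le_player_cong[of e p i N] e(1) unfolding player_cost_def by linarith
  also have "\<dots> \<le> player_cost N (p(i := q)) i"
    using nash \<open>i < N\<close> \<open>q \<in> P i\<close> unfolding is_nash_def by blast
  finally have "t \<le> player_cong N (p(i := q)) i"
    using short unfolding player_cost_def by auto
  then obtain e' where "e' \<in> path_edges q" "t \<le> edge_cong N (p(i := q)) e'"
    using player_cong_attained[of t N "p(i := q)" i] short by auto
  then show ?thesis using edge_cong_update[of N p i q e'] le_trans by blast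
qed

lemma congested_edges_shrink:
  assumes nash: "is_nash N P p" and "finite E"
    and p': "\<And>i. i < N \<Longrightarrow> p' i \<in> P i \<and> path_edges (p' i) \<subseteq> E \<and> path_len (p' i) \<le> t"
  shows "card (congested_edges E N p (Suc t)) * Suc t
           \<le> card (congested_edges E N p t) * congestion E N p' * dilation N p"
proof -
  let ?S = "congested_edges E N p"
  have fS: "finite (?S u)" for u using \<open>finite E\<close> unfolding congested_edges_def by auto
  have users_sub: "users N p (?S (Suc t)) \<subseteq> users N p' (?S t)"
  proof
    fix i assume "i \<in> users N p (?S (Suc t))"
    then obtain e where "i < N" "e \<in> path_edges (p i)" "e \<in> ?S (Suc t)"
      unfolding users_def by auto
    moreover have "path_len (p' i) < Suc t" using p'[OF \<open>i < N\<close>] by simp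
    ultimately obtain e' where "e' \<in> path_edges (p' i)" "Suc t \<le> edge_cong N p e' + 1"
      using nash_deviation[OF nash, of i "p' i" e "Suc t"] p' unfolding congested_edges_def
      by blast
    then show "i \<in> users N p' (?S t)"
      using p' \<open>i < N\<close> unfolding users_def congested_edges_def by auto
  qed
  have "card (?S (Suc t)) * Suc t \<le> (\<Sum>e\<in>?S (Suc t). edge_cong N p e)"
    using sum_bounded_below[of "?S (Suc t)" "Suc t" "edge_cong N p"]
    unfolding congested_edges_def by force
  also have "\<dots> \<le> card (users N p (?S (Suc t))) * dilation N p"
    by (rule load_le_users_dilation[OF fS])
  also have "\<dots> \<le> card (users N p' (?S t)) * dilation N p"
    using users_sub fS by (intro mult_le_mono1 card_mono) (auto simp: users_def)
  also have "\<dots> \<le> card (?S t) * congestion E N p' * dilation N p"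
    using \<open>finite E\<close> by (intro mult_le_mono1 card_users_le) (auto simp: congested_edges_def)
  finally show ?thesis .
qed

lemma double_of_shrink:
  fixes x y m s :: nat
  assumes "x * s \<le> y * m" "2 * m \<le> s" "0 < x" "0 < s"
  shows "2 * x \<le> y"
proof -
  have "0 < x * s" using assms(3,4) by simp
  then have "0 < m" using assms(1) by (cases "m = 0") auto
  have "(2 * x) * m \<le> x * s" using assms(2) by (simp add: mult.assoc mult.left_commute)
  also have "\<dots> \<le> y * m" by (rule assms(1))
  finally show ?thesis using \<open>0 < m\<close> by simp
qed

lemma congested_edges_double:
  assumes "is_nash N P p" "finite E"
    and "\<And>i. i < N \<Longrightarrow> p' i \<in> P i \<and> path_edges (p' i) \<subseteq> E \<and> path_len (p' i) \<le> t"
    and "2 * (congestion E N p' * dilation N p) \<le> Suc t"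
    and "0 < card (congested_edges E N p (Suc t))"
  shows "2 * card (congested_edges E N p (Suc t)) \<le> card (congested_edges E N p t)"
proof (rule double_of_shrink)
  show "card (congested_edges E N p (Suc t)) * Suc t
          \<le> card (congested_edges E N p t) * (congestion E N p' * dilation N p)"
    using congested_edges_shrink[OF assms(1-3)] by (simp only: mult.assoc)
qed (use assms(4,5) in simp_all)

lemma path_len_le_max_path_len:
  assumes "routing_game V E N src dst P" "i < N" "q \<in> P i"
  shows "path_len q \<le> max_path_len N P"
  unfolding max_path_len_def
  using assms unfolding routing_game_def by (intro Max_ge) auto

lemma dilation_le_max_path_len:
  assumes "routing_game V E N src dst P" "is_routing N P r"
  shows "dilation N r \<le> max_path_len N P"
  unfolding dilation_def
  using assms path_len_le_max_path_len[OF assms(1)] unfolding is_routing_def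
  by (intro Max.boundedI) auto

text \<open>Paths of p' of
  positive length force C(p') >= 1 and hence are at most L C(p') <= t long.\<close>
lemma game_congested_edges_double:
  assumes game: "routing_game V E N src dst P" and nash: "is_nash N P p"
    and p': "is_routing N P p'"
    and level: "2 * max_path_len N P * congestion E N p' \<le> Suc t"
    and "0 < card (congested_edges E N p (Suc t))"
  shows "2 * card (congested_edges E N p (Suc t)) \<le> card (congested_edges E N p t)"
proof (rule congested_edges_double[OF nash])
  let ?L = "max_path_len N P" and ?C' = "congestion E N p'"
  show fE: "finite E"
    using game simple_graph_edges(1) unfolding routing_game_def by blast
  fix i assume "i < N"
  have inP: "p' i \<in> P i" using p' \<open>i < N\<close> unfolding is_routing_def by blast
  have inE: "path_edges (p' i) \<subseteq> E"
    using game \<open>i < N\<close> inP path_edges_subset[of V E "src i" "dst i" "p' i"]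
    unfolding routing_game_def by blast
  have "path_len (p' i) \<le> t"
  proof (cases "path_len (p' i) = 0")
    case False
    then have "1 \<le> ?C'" using congestion_pos[of E i N p'] fE \<open>i < N\<close> inE by simp
    then have "?L \<le> ?L * ?C'" by simp
    then have "path_len (p' i) \<le> ?L * ?C'"
      using path_len_le_max_path_len[OF game \<open>i < N\<close> inP] by (rule le_trans[rotated])
    then show ?thesis using level by linarith
  qed simp
  then show "p' i \<in> P i \<and> path_edges (p' i) \<subseteq> E \<and> path_len (p' i) \<le> t"
    using inP inE by blast
next
  have "dilation N p \<le> max_path_len N P"
    using dilation_le_max_path_len[OF game] nash unfolding is_nash_def by blast
  then have "2 * (congestion E N p' * dilation N p) \<le> 2 * max_path_len N P * congestion E N p'"
    by (simp add: mult.commute)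
  then show "2 * (congestion E N p' * dilation N p) \<le> Suc t" using level by (rule le_trans)
qed (use assms(5) in simp)

lemma doubling_chain:
  fixes f :: "nat \<Rightarrow> nat"
  assumes pos: "0 < f m"
    and step: "\<And>t. m - d \<le> t \<Longrightarrow> t < m \<Longrightarrow> 0 < f (Suc t) \<Longrightarrow> 2 * f (Suc t) \<le> f t"
    and "d \<le> m"
  shows "2 ^ d \<le> f (m - d)"
  using assms(2,3)
proof (induction d)
  case 0
  then show ?case using pos by simp
next
  case (Suc d)
  have IH: "2 ^ d \<le> f (m - d)" using Suc by simp
  have up: "Suc (m - Suc d) = m - d" using Suc.prems(2) by simp
  have "0 < f (m - d)" using IH by (metis le_zero_eq neq0_conv power_eq_0_iff zero_neq_numeral)
  then have "2 * f (m - d) \<le> f (m - Suc d)"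
    using Suc.prems(1)[of "m - Suc d"] Suc.prems(2) up by simp
  then show ?case using IH by simp
qed

lemma square_less_pow2:
  fixes n k :: nat
  assumes "1 \<le> n" "2 * log 2 n < k"
  shows "n ^ 2 < 2 ^ k"
proof -
  have "2 powr (2 * log 2 n) = (2 powr (log 2 n)) powr 2" by (simp add: powr_powr mult.commute)
  also have "\<dots> = real n ^ 2" using assms(1) by (simp add: powr_realpow)
  finally have "real n ^ 2 = 2 powr (2 * log 2 n)" by simp
  also have "\<dots> < 2 powr k" using assms(2) by simp
  finally have "real (n ^ 2) < real (2 ^ k)" by (simp add: powr_realpow)
  then show ?thesis by linarith
qed

theorem mainTheorem5:
  fixes V :: "'v set" and E :: "'v set set" and N :: nat
    and src dst :: "nat \<Rightarrow> 'v" and P :: "nat \<Rightarrow> 'v list set"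
    and p pstar :: "nat \<Rightarrow> 'v list"
  assumes "routing_game V E N src dst P"
    and "card V \<ge> 2"
    and "is_nash N P p"
    and "is_optimal E N P pstar"
    and "real (congestion E N p) \<ge> real (dilation N p) + 2 * log 2 (card V) + 2"
  shows "real (congestion E N p)
           < 2 * real (max_path_len N P) * real (congestion E N pstar) + 2 * log 2 (card V)"
proof (rule ccontr)
  let ?C = "congestion E N p" and ?S = "congested_edges E N p" and ?n = "card V"
  assume "\<not> ?thesis"
  then have big: "2 * real (max_path_len N P) * real (congestion E N pstar) + 2 * log 2 ?n \<le> ?C"
    by simp
  have sg: "simple_graph V E" using assms(1) unfolding routing_game_def by blast
  have logn: "1 \<le> log 2 ?n" using assms(2) by simp
  define k where "k = nat \<lfloor>2 * log 2 ?n\<rfloor> + 1"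
  have k: "2 * log 2 ?n < k" "real k \<le> 2 * log 2 ?n + 1" "k \<le> ?C"
    using logn assms(5) unfolding k_def by linarith+
  have "0 < card (?S ?C)"
    using congestion_attained[OF simple_graph_edges(1)[OF sg], of N p] k(3) k(1) logn
    unfolding congested_edges_def by (auto simp: card_gt_0_iff simple_graph_edges(1)[OF sg])
  then have "2 ^ k \<le> card (?S (?C - k))"
  proof (rule doubling_chain[OF _ _ k(3)])
    fix t assume "?C - k \<le> t" "0 < card (?S (Suc t))"
    moreover have "real (2 * max_path_len N P * congestion E N pstar) \<le> real (Suc t)"
      using big k(2) \<open>?C - k \<le> t\<close> k(3) of_nat_diff[OF k(3), where 'a = real] by simp
    then have "2 * max_path_len N P * congestion E N pstar \<le> Suc t" by linarith
    ultimately show "2 * card (?S (Suc t)) \<le> card (?S t)"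
      using game_congested_edges_double[OF assms(1,3)] assms(4) unfolding is_optimal_def by blast
  qed
  also have "\<dots> \<le> card E"
    using simple_graph_edges(1)[OF sg] by (intro card_mono) (auto simp: congested_edges_def)
  also have "\<dots> \<le> ?n ^ 2" by (rule simple_graph_edges(2)[OF sg])
  finally show False using square_less_pow2[OF _ k(1)] assms(2) by linarith
qed

end
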